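(* Consider $N$ follower agents with states $z_i(t)\in\mathbb{R}^n$, $i=1,\dots,N$, governed by $$\dot z_i(t)=\sum_{j=1}^{N}A^{\sigma(t)}_{ij}\big(h(z_j)-h(z_i)\big)+d^{\sigma(t)}_i\big(h(z_\gamma)-h(z_i)\big),$$ where $z_\gamma\in\mathbb{R}^n$ is a constant reference vector (the virtual leader), $h:\mathbb{R}^n\to\mathbb{R}^n$ is a polynomial map, and the switching data are as described in the context. Suppose that: (i) (Assumption 1) there exist a continuously differentiable, radially unbounded, positive definite polynomial $V:\mathbb{R}^n\to[0,\infty)$, a polynomial map $q:\mathbb{R}^n\to\mathbb{R}^p$ with $q(\alpha)=0\iff\alpha=0$, and a symmetric positive definite matrix $\Psi\in\mathbb{R}^{p\times p}$ such that for all $\alpha,\beta,\gamma\in\mathbb{R}^n$, $$\big(\nabla V(\alpha-\gamma)-\nabla V(\beta-\gamma)\big)^{\top}\big(h(\alpha)-h(\beta)\big)\ \ge\ \big(q(\alpha-\gamma)-q(\beta-\gamma)\big)^{\top}\Psi\big(q(\alpha-\gamma)-q(\beta-\gamma)\big);$$ (ii) for every $\kappa=0,1,2,\dots$, the switching graphs are jointly connected on $[t_\kappa,t_{\kappa+1})$, i.e. the undirected graph on nodes $\{0,1,\dots,N\}$ having edge $\{i,j\}$ ($i\ne j\ge1$) iff $A^{\sigma(t)}_{ij}>0$ for some $t\in[t_\kappa,t_{\kappa+1})$ and edge $\{0,i\}$ iff $d^{\sigma(t)}_i>0$ for some $t\in[t_\kappa,t_{\kappa+1})$, is connected. Then consensus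 is achieved: for every initial condition, $\lim_{t\to\infty}\|z_i(t)-z_\gamma\|=0$ for all $i=1,\dots,N$ (equivalently, for every $\epsilon>0$ there is $T>0$ with $\|z_i(t)-z_\gamma\|\le\epsilon$ for all $t\ge T$ and all $i$).
   Context: Switching data: there are finitely many modes $\mathcal{M}=\{1,\dots,m\}$; for each $k\in\mathcal{M}$, $A^{k}=(A^k_{ij})\in\mathbb{R}^{N\times N}$ is symmetric with nonnegative entries and zero diagonal (weighted adjacency matrix of an undirected graph among followers), and $d^k_i\ge0$ ($d^k_i>0$ iff follower $i$ receives the leader's information in mode $k$). The switching signal $\sigma:[0,\infty)\to\mathcal{M}$ is piecewise constant. There is a sequence $0=t_0<t_1<t_2<\cdots$ with $\sup_\kappa(t_{\kappa+1}-t_\kappa)<\infty$, and each $[t_\kappa,t_{\kappa+1})$ is partitioned into finitely many contiguous subintervals $[t_\kappa^{l},t_\kappa^{l+1})$, $l=0,\dots,s_\kappa-1$, with $t_\kappa^0=t_\kappa$, $t_\kappa^{s_\kappa}=t_{\kappa+1}$, such that $\sigma$ is constant on each subinterval and there is a dwell time $\tau>0$ with $t_\kappa^{l+1}-t_\kappa^{l}\ge\tau$ for all $\kappa,l$. Individual graphs need not be connected. $\nabla V(x)$ denotes the gradient of $V$ at $x$. $V$ positive definite means $V(0)=0$ and $V(x)>0$ for $x\neq0$; radially unbounded means $V(x)\to\infty$ as $\|x\|\to\infty$. *)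

theory Defs
  imports "HOL-Analysis.Analysis"
begin

inductive poly_fun :: "(real^'n \<Rightarrow> real) \<Rightarrow> bool" where
  pf_const: "poly_fun (\<lambda>x. c)"
| pf_coord: "poly_fun (\<lambda>x. x $ i)"
| pf_add: "poly_fun f \<Longrightarrow> poly_fun g \<Longrightarrow> poly_fun (\<lambda>x. f x + g x)"
| pf_mult: "poly_fun f \<Longrightarrow> poly_fun g \<Longrightarrow> poly_fun (\<lambda>x. f x * g x)"

definition poly_map :: "(real^'n \<Rightarrow> real^'p) \<Rightarrow> bool" where
  "poly_map f \<longleftrightarrow> (\<forall>k. poly_fun (\<lambda>x. f x $ k))"

definition admissible_switching :: "(real \<Rightarrow> 'm) \<Rightarrow> (nat \<Rightarrow> real) \<Rightarrow> bool" where
  "admissible_switching \<sigma> t \<longleftrightarrow>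
     t 0 = 0 \<and> (\<forall>k. t k < t (Suc k)) \<and> (\<exists>B. \<forall>k. t (Suc k) - t k \<le> B) \<and>
     (\<exists>\<tau>>0. \<forall>k. \<exists>(s::nat) (tt::nat \<Rightarrow> real).
        tt 0 = t k \<and> tt s = t (Suc k) \<and>
        (\<forall>l<s. tt (Suc l) - tt l \<ge> \<tau> \<and>
               (\<forall>r\<in>{tt l..<tt (Suc l)}. \<sigma> r = \<sigma> (tt l))))"

text \<open>Union graph on [t k, t (k+1)): nodes None (the leader, node 0) and Some i (followers).\<close>
definition union_edge ::
  "('m \<Rightarrow> 'f \<Rightarrow> 'f \<Rightarrow> real) \<Rightarrow> ('m \<Rightarrow> 'f \<Rightarrow> real) \<Rightarrow> (real \<Rightarrow> 'm) \<Rightarrow> real \<Rightarrow> real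
     \<Rightarrow> 'f option \<Rightarrow> 'f option \<Rightarrow> bool" where
  "union_edge A d \<sigma> a b u v \<longleftrightarrow>
     (case (u, v) of
        (Some i, Some j) \<Rightarrow> i \<noteq> j \<and> (\<exists>r\<in>{a..<b}. A (\<sigma> r) i j > 0)
      | (None, Some i) \<Rightarrow> (\<exists>r\<in>{a..<b}. d (\<sigma> r) i > 0)
      | (Some i, None) \<Rightarrow> (\<exists>r\<in>{a..<b}. d (\<sigma> r) i > 0)
      | (None, None) \<Rightarrow> False)"

definition jointly_connected ::
  "('m \<Rightarrow> 'f \<Rightarrow> 'f \<Rightarrow> real) \<Rightarrow> ('m \<Rightarrow> 'f \<Rightarrow> real) \<Rightarrow> (real \<Rightarrow> 'm) \<Rightarrow> real \<Rightarrow> real \<Rightarrow> bool" where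
  "jointly_connected A d \<sigma> a b \<longleftrightarrow> (\<forall>u v. (union_edge A d \<sigma> a b)\<^sup>*\<^sup>* u v)"

end

theory Submission
  imports Defs
begin

text \<open>With the tracking errors \<open>e\<^sub>i = z\<^sub>i - z\<^sub>\<gamma>\<close>, the sum \<open>W = \<Sum>\<^sub>i V(e\<^sub>i)\<close> is nonincreasing:
  by the symmetry of \<open>A\<close> and Assumption 1 its right derivative is minus a sum of nonnegative
  terms, one per active edge, each bounding the \<open>\<Psi>\<close>-weighted square of the difference of the
  \<open>q\<close>-values at the ends of the edge (the leader counting with \<open>q(0) = 0\<close>). As \<open>W\<close> converges, on
  late dwell intervals it hardly decreases, so the dissipation is small at some early instant,
  and then along the current graph the \<open>q\<close>-values, hence the errors, are nearly equal. Errors that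
  are small on a set of followers therefore become small on everything the current graph
  connects to this set or to the leader, and stay small there because the Lyapunov sum of a
  connected component cannot increase. Joint connectivity enlarges this set in every period
  \<open>[t k, t (k + 1))\<close>, so after \<open>N\<close> periods all errors are small; hence \<open>inf W = 0\<close> and every
  error tends to \<open>0\<close>.\<close>

lemma right_DERIV_less_imp_increment_le:
  fixes g :: "real \<Rightarrow> real"
  assumes ab: "a \<le> b" and g_cont: "continuous_on {a..b} g"
    and g_deriv: "\<And>x. x \<in> {a..<b} \<Longrightarrow> (g has_real_derivative g' x) (at x within {x..})"
    and g'_less: "\<And>x. x \<in> {a..<b} \<Longrightarrow> g' x < c"
  shows "g b \<le> g a + c * (b - a)"
proof (rule ccontr)
  assume violated: "\<not> ?thesis"
  define \<phi> where "\<phi> x = g x - g a - c * (x - a)" for x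
  define S where "S = {x\<in>{a..b}. \<phi> x \<le> 0}"
  have "continuous_on {a..b} \<phi>" unfolding \<phi>_def by (intro continuous_intros g_cont)
  moreover have "S = {a..b} \<inter> \<phi> -` {..0}" unfolding S_def by auto
  ultimately have "closed S" using continuous_closed_preimage[of "{a..b}" \<phi> "{..0}"] by simp
  have "a \<in> S" using ab by (simp add: S_def \<phi>_def)
  have "bdd_above S" unfolding S_def by (rule bdd_aboveI[of _ b]) auto
  define m where "m = Sup S"
  have "m \<in> S"
    unfolding m_def using closed_contains_Sup[OF _ \<open>bdd_above S\<close> \<open>closed S\<close>] \<open>a \<in> S\<close> by blast
  then have "a \<le> m" "\<phi> m \<le> 0" by (simp_all add: S_def)
  have "m < b"
    using \<open>m \<in> S\<close> violated by (auto simp: S_def \<phi>_def algebra_simps order.order_iff_strict)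
  have above: "\<phi> x > 0" if "m < x" "x \<le> b" for x
  proof (rule ccontr)
    assume "\<not> \<phi> x > 0"
    then have "x \<in> S" using that \<open>a \<le> m\<close> by (simp add: S_def)
    then have "x \<le> m" unfolding m_def using \<open>bdd_above S\<close> by (rule cSup_upper)
    then show False using that by simp
  qed
  have "(\<phi> has_real_derivative (g' m - c)) (at m within {m..})"
    unfolding \<phi>_def using g_deriv[of m] \<open>a \<le> m\<close> \<open>m < b\<close> by (auto intro!: derivative_eq_intros)
  moreover have "g' m - c < 0" using g'_less[of m] \<open>a \<le> m\<close> \<open>m < b\<close> by simp
  ultimately obtain r where r: "r > 0" "\<And>h. h > 0 \<Longrightarrow> m + h \<in> {m..} \<Longrightarrow> h < r \<Longrightarrow> \<phi> (m + h) < \<phi> m"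
    using has_real_derivative_neg_dec_right by blast
  define h where "h = min (r / 2) (b - m)"
  have "h > 0" "h < r" "m + h \<le> b" using r \<open>m < b\<close> by (auto simp: h_def)
  then show False using r(2)[of h] above[of "m + h"] \<open>\<phi> m \<le> 0\<close> by simp
qed

lemma right_DERIV_nonpos_imp_le:
  fixes g :: "real \<Rightarrow> real"
  assumes "a \<le> b" "continuous_on {a..b} g"
    and "\<And>x. x \<in> {a..<b} \<Longrightarrow> (g has_real_derivative g' x) (at x within {x..})"
    and "\<And>x. x \<in> {a..<b} \<Longrightarrow> g' x \<le> 0"
  shows "g b \<le> g a"
proof (rule field_le_epsilon)
  fix \<epsilon> :: real assume "\<epsilon> > 0"
  have "g b \<le> g a + \<epsilon> / (b - a + 1) * (b - a)"
  proof (rule right_DERIV_less_imp_increment_le[OF assms(1-3)])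
    fix x assume "x \<in> {a..<b}"
    then have "g' x \<le> 0" by (rule assms(4))
    moreover have "0 < \<epsilon> / (b - a + 1)" using \<open>a \<le> b\<close> \<open>\<epsilon> > 0\<close> by simp
    ultimately show "g' x < \<epsilon> / (b - a + 1)" by linarith
  qed
  also have "\<dots> \<le> g a + \<epsilon>"
    using \<open>a \<le> b\<close> \<open>\<epsilon> > 0\<close> by (simp add: field_simps)
  finally show "g b \<le> g a + \<epsilon>" .
qed

lemma right_vector_DERIV_bound_imp_lipschitz:
  fixes f :: "real \<Rightarrow> 'a::real_inner"
  assumes ab: "a \<le> b" and f_cont: "continuous_on {a..b} f"
    and f_deriv: "\<And>x. x \<in> {a..<b} \<Longrightarrow> (f has_vector_derivative f' x) (at x within {x..})"
    and f'_bound: "\<And>x. x \<in> {a..<b} \<Longrightarrow> norm (f' x) \<le> M"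
  shows "norm (f b - f a) \<le> M * (b - a)"
proof -
  define u where "u = f b - f a"
  define g where "g x = u \<bullet> f x - M * norm u * x" for x
  have "g b \<le> g a"
  proof (rule right_DERIV_nonpos_imp_le[OF ab, of g "\<lambda>x. u \<bullet> f' x - M * norm u"])
    show "continuous_on {a..b} g" unfolding g_def by (intro continuous_intros f_cont)
  next
    fix x assume x: "x \<in> {a..<b}"
    have "((\<lambda>x. u \<bullet> f x) has_real_derivative u \<bullet> f' x) (at x within {x..})"
      using f_deriv[OF x] unfolding has_vector_derivative_def has_field_derivative_def
      by (auto intro!: derivative_eq_intros simp: inner_scaleR_right)
    then show "(g has_real_derivative u \<bullet> f' x - M * norm u) (at x within {x..})"
      unfolding g_def by (auto intro!: derivative_eq_intros)
    have "u \<bullet> f' x \<le> norm u * norm (f' x)" by (rule norm_cauchy_schwarz)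
    also have "\<dots> \<le> norm u * M" using f'_bound[OF x] by (simp add: mult_left_mono)
    finally show "u \<bullet> f' x - M * norm u \<le> 0" by (simp add: algebra_simps)
  qed
  then have "u \<bullet> u \<le> M * norm u * (b - a)"
    unfolding g_def u_def by (simp add: algebra_simps inner_diff_right)
  then have "norm u * norm u \<le> norm u * (M * (b - a))"
    by (simp add: power2_norm_eq_inner[symmetric] power2_eq_square algebra_simps)
  moreover have "0 \<le> M * (b - a)"
  proof (cases "a = b")
    case False
    then have "0 \<le> M" using f'_bound[of a] ab by (meson atLeastLessThan_iff norm_ge_zero order.trans order_refl order_less_le)
    then show ?thesis using ab by simp
  qed simp
  ultimately show ?thesis unfolding u_def[symmetric]
    by (cases "norm u = 0") (auto simp: mult_le_cancel_left)
qed

lemma poly_fun_continuous: "poly_fun f \<Longrightarrow> continuous_on UNIV f"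
  by (induction rule: poly_fun.induct) (auto intro!: continuous_intros)

lemma poly_map_continuous:
  assumes "poly_map f"
  shows "continuous_on UNIV f"
proof -
  have "continuous_on UNIV (\<lambda>x. \<chi> k. f x $ k)"
    using assms unfolding poly_map_def by (intro continuous_intros poly_fun_continuous) auto
  then show ?thesis by simp
qed

lemma compact_pos_lower_bound:
  fixes f :: "'a::metric_space \<Rightarrow> real"
  assumes "compact K" "continuous_on K f" "\<And>x. x \<in> K \<Longrightarrow> f x > 0"
  shows "\<exists>\<mu>>0. \<forall>x\<in>K. \<mu> \<le> f x"
proof (cases "K = {}")
  case False
  then obtain x0 where "x0 \<in> K" "\<forall>x\<in>K. f x0 \<le> f x"
    using continuous_attains_inf[OF assms(1) False assms(2)] by blast
  then show ?thesis using assms(3) by blast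
qed (auto intro: exI[of _ 1])

lemma continuous_vanishing_at_zero:
  fixes f :: "'a::real_normed_vector \<Rightarrow> 'b::real_normed_vector"
  assumes "continuous_on UNIV f" "f 0 = 0" "\<eta> > 0"
  shows "\<exists>\<rho>>0. \<forall>x. norm x < \<rho> \<longrightarrow> norm (f x) < \<eta>"
proof -
  obtain \<rho> where "\<rho> > 0" "\<And>x. dist x 0 < \<rho> \<Longrightarrow> dist (f x) (f 0) < \<eta>"
    using assms(1,3) unfolding continuous_on_iff by blast
  then show ?thesis using assms(2) by (auto simp: dist_norm)
qed

lemma small_value_imp_small_arg:
  fixes f :: "'a::{real_normed_vector,heine_borel} \<Rightarrow> 'b::real_normed_vector"
  assumes "continuous_on (cball 0 R) f" "\<And>x. x \<in> cball 0 R \<Longrightarrow> f x = 0 \<Longrightarrow> x = 0" "\<rho> > 0"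
  shows "\<exists>\<mu>>0. \<forall>x\<in>cball 0 R. norm (f x) < \<mu> \<longrightarrow> norm x < \<rho>"
proof -
  define K where "K = cball (0::'a) R - ball 0 \<rho>"
  have "compact K" unfolding K_def by (intro compact_diff compact_cball) auto
  moreover have "continuous_on K (\<lambda>x. norm (f x))"
    unfolding K_def by (intro continuous_intros continuous_on_subset[OF assms(1)]) auto
  moreover have "norm (f x) > 0" if "x \<in> K" for x
  proof -
    have "x \<in> cball 0 R" "x \<noteq> 0" using that assms(3) by (auto simp: K_def)
    then show ?thesis using assms(2) by auto
  qed
  ultimately obtain \<mu> where "\<mu> > 0" "\<forall>x\<in>K. \<mu> \<le> norm (f x)"
    using compact_pos_lower_bound[of K "\<lambda>x. norm (f x)"] by blast
  have "norm x < \<rho>" if "x \<in> cball 0 R" "norm (f x) < \<mu>" for x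
  proof (rule ccontr)
    assume "\<not> norm x < \<rho>"
    then have "x \<in> K" using that(1) by (simp add: K_def)
    then show False using \<open>\<forall>x\<in>K. \<mu> \<le> norm (f x)\<close> that(2) by auto
  qed
  then show ?thesis using \<open>\<mu> > 0\<close> by blast
qed

lemma pos_def_quadratic_form_lower_bound:
  fixes \<Psi> :: "real^'n^'n"
  assumes pos_def: "\<And>x. x \<noteq> 0 \<Longrightarrow> x \<bullet> (\<Psi> *v x) > 0"
  shows "\<exists>\<kappa>>0. \<forall>x. \<kappa> * (norm x)\<^sup>2 \<le> x \<bullet> (\<Psi> *v x)"
proof -
  have "continuous_on (sphere 0 1) (\<lambda>x. x \<bullet> (\<Psi> *v x))"
    by (intro continuous_intros)
  moreover have "x \<bullet> (\<Psi> *v x) > 0" if "x \<in> sphere 0 1" for x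
  proof -
    have "x \<noteq> 0" using that by auto
    then show ?thesis by (rule pos_def)
  qed
  ultimately obtain \<kappa> where \<kappa>: "\<kappa> > 0" "\<forall>u\<in>sphere 0 1. \<kappa> \<le> u \<bullet> (\<Psi> *v u)"
    using compact_pos_lower_bound[OF compact_sphere] by blast
  have "\<kappa> * (norm x)\<^sup>2 \<le> x \<bullet> (\<Psi> *v x)" for x
  proof (cases "x = 0")
    case False
    define u where "u = x /\<^sub>R norm x"
    have "u \<in> sphere 0 1" using False by (simp add: u_def)
    have scale: "(r *\<^sub>R v) \<bullet> (\<Psi> *v (r *\<^sub>R v)) = r\<^sup>2 * (v \<bullet> (\<Psi> *v v))" for r v
      by (simp add: matrix_vector_mult_scaleR power2_eq_square)
    have "x = norm x *\<^sub>R u" using False by (simp add: u_def)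
    then have "x \<bullet> (\<Psi> *v x) = (norm x)\<^sup>2 * (u \<bullet> (\<Psi> *v u))"
      using scale[of "norm x" u] by metis
    moreover have "\<kappa> \<le> u \<bullet> (\<Psi> *v u)" using \<kappa>(2) \<open>u \<in> sphere 0 1\<close> by blast
    ultimately show ?thesis by (simp add: mult.commute mult_right_mono)
  qed simp
  then show ?thesis using \<kappa>(1) by blast
qed

lemma finite_pos_values_bounded_below:
  fixes f :: "'a::finite \<Rightarrow> real"
  shows "\<exists>c>0. \<forall>x. 0 < f x \<longrightarrow> c \<le> f x"
proof -
  define P where "P = insert 1 (f ` {x. 0 < f x})"
  have "finite P" "0 \<notin> P" "\<forall>y\<in>P. 0 \<le> y" unfolding P_def by auto
  then have "0 < Min P" using Min_in[of P] by (fastforce simp: P_def)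
  moreover have "Min P \<le> f x" if "0 < f x" for x
    using \<open>finite P\<close> that by (auto simp: P_def)
  ultimately show ?thesis by blast
qed

lemma relpowp_norm_diff_le:
  fixes f :: "'a \<Rightarrow> 'b::real_normed_vector"
  assumes "(r ^^ n) u v" "\<And>x y. r x y \<Longrightarrow> norm (f x - f y) \<le> \<epsilon>"
  shows "norm (f v - f u) \<le> real n * \<epsilon>"
  using assms(1)
proof (induction n arbitrary: v)
  case (Suc n)
  then obtain w where w: "(r ^^ n) u w" "r w v" by auto
  have "norm (f v - f u) \<le> norm (f v - f w) + norm (f w - f u)"
    using norm_triangle_ineq[of "f v - f w" "f w - f u"] by simp
  also have "\<dots> \<le> \<epsilon> + real n * \<epsilon>"
    using assms(2)[OF w(2)] Suc.IH[OF w(1)] norm_minus_commute[of "f v" "f w"] by simp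
  finally show ?case by (simp add: algebra_simps)
qed simp

lemma rtranclp_norm_diff_le:
  fixes f :: "'a::finite \<Rightarrow> 'b::real_normed_vector"
  assumes "r\<^sup>*\<^sup>* u v" "\<And>x y. r x y \<Longrightarrow> norm (f x - f y) \<le> \<epsilon>" "0 \<le> \<epsilon>"
  shows "norm (f v - f u) \<le> real CARD('a \<times> 'a) * \<epsilon>"
proof -
  define R where "R = {(x, y). r x y}"
  have "(u, v) \<in> R\<^sup>*" using assms(1) by (simp add: R_def rtranclp_rtrancl_eq)
  also have "R\<^sup>* = (\<Union>n\<in>{n. n \<le> card R}. R ^^ n)" by (rule rtrancl_finite_eq_relpow) simp
  finally obtain n where n: "n \<le> card R" "(u, v) \<in> R ^^ n" by blast
  moreover have "r = (\<lambda>x y. (x, y) \<in> R)" by (simp add: R_def)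
  ultimately have "(r ^^ n) u v" by (simp add: relpowp_relpow_eq)
  then have "norm (f v - f u) \<le> real n * \<epsilon>" using assms(2) by (rule relpowp_norm_diff_le)
  also have "\<dots> \<le> real CARD('a \<times> 'a) * \<epsilon>"
  proof (intro mult_right_mono)
    have "card R \<le> CARD('a \<times> 'a)" by (rule card_mono) auto
    then show "real n \<le> real CARD('a \<times> 'a)" using n(1) by linarith
  qed (rule assms(3))
  finally show ?thesis .
qed

lemma rtranclp_exit_edge:
  assumes "r\<^sup>*\<^sup>* u v" "P u" "\<not> P v"
  shows "\<exists>x y. r x y \<and> P x \<and> \<not> P y"
  using assms by (induction rule: rtranclp_induct) blast+

lemma subdivision_covers_atLeastLessThan:
  fixes a :: "nat \<Rightarrow> real"
  assumes "\<And>l. l < n \<Longrightarrow> a l \<le> a (Suc l)" "r \<in> {a 0..<a n}"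
  shows "\<exists>l<n. r \<in> {a l..<a (Suc l)}"
  using assms
proof (induction n)
  case (Suc n)
  show ?case
  proof (cases "r < a n")
    case True
    then show ?thesis using Suc by (auto intro: less_SucI)
  next
    case False
    then show ?thesis using Suc.prems by (intro exI[of _ n]) auto
  qed
qed simp

text \<open>If the Lyapunov function \<open>W\<close> hardly decreases from \<open>a\<close> to \<open>b\<close>, errors \<open>v\<close> small on \<open>S\<close> at
  time \<open>a\<close> are small on \<open>S'\<close> at time \<open>b\<close>; uniformity in \<open>a\<close> makes this compose along relations.\<close>

definition propagates ::
  "(real \<Rightarrow> real) \<Rightarrow> (real \<Rightarrow> 'i \<Rightarrow> real) \<Rightarrow> (real \<times> 'i set \<Rightarrow> real \<times> 'i set \<Rightarrow> bool) \<Rightarrow> bool" where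
  "propagates W v R \<longleftrightarrow> (\<forall>\<eta>>0. \<exists>\<eta>'>0. \<exists>\<delta>>0. \<forall>a S b S'. R (a, S) (b, S') \<longrightarrow> 0 \<le> a \<longrightarrow>
     W a - W b < \<delta> \<longrightarrow> (\<forall>i\<in>S. v a i < \<eta>') \<longrightarrow> (\<forall>i\<in>S'. v b i < \<eta>))"

lemma propagates_eq: "propagates W v (=)"
  unfolding propagates_def by (auto intro: exI[of _ 1])

lemma propagates_relcompp:
  assumes W_antitone: "\<And>a b. 0 \<le> a \<Longrightarrow> a \<le> b \<Longrightarrow> W b \<le> W a"
    and R_forward: "\<And>x y. R x y \<Longrightarrow> fst x \<le> fst y"
    and Q_forward: "\<And>x y. Q x y \<Longrightarrow> fst x \<le> fst y"
    and R: "propagates W v R" and Q: "propagates W v Q"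
  shows "propagates W v (R OO Q)"
  unfolding propagates_def
proof (intro allI impI)
  fix \<eta> :: real assume "\<eta> > 0"
  from Q[unfolded propagates_def, rule_format, OF this]
  obtain \<eta>1 \<delta>Q where "\<eta>1 > 0" "\<delta>Q > 0" and Q_step: "\<forall>a S b S'. Q (a, S) (b, S') \<longrightarrow> 0 \<le> a \<longrightarrow>
      W a - W b < \<delta>Q \<longrightarrow> (\<forall>i\<in>S. v a i < \<eta>1) \<longrightarrow> (\<forall>i\<in>S'. v b i < \<eta>)"
    by blast
  from R[unfolded propagates_def, rule_format, OF \<open>\<eta>1 > 0\<close>]
  obtain \<eta>' \<delta>R where "\<eta>' > 0" "\<delta>R > 0" and R_step: "\<forall>a S b S'. R (a, S) (b, S') \<longrightarrow> 0 \<le> a \<longrightarrow>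
      W a - W b < \<delta>R \<longrightarrow> (\<forall>i\<in>S. v a i < \<eta>') \<longrightarrow> (\<forall>i\<in>S'. v b i < \<eta>1)"
    by blast
  have "\<forall>i\<in>S'. v c i < \<eta>"
    if RQ: "(R OO Q) (a, S) (c, S')" and "0 \<le> a" and drop: "W a - W c < min \<delta>R \<delta>Q"
      and small: "\<forall>i\<in>S. v a i < \<eta>'" for a S c S'
  proof -
    obtain b S'' where R_ab: "R (a, S) (b, S'')" and Q_bc: "Q (b, S'') (c, S')" using RQ by auto
    have "a \<le> b" "b \<le> c" using R_forward[OF R_ab] Q_forward[OF Q_bc] by simp_all
    then have "W b \<le> W a" "W c \<le> W b" using W_antitone \<open>0 \<le> a\<close> by auto
    then have "W a - W b < \<delta>R" "W b - W c < \<delta>Q" using drop by linarith+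
    then have "\<forall>i\<in>S''. v b i < \<eta>1" using R_step R_ab \<open>0 \<le> a\<close> small by blast
    moreover have "0 \<le> b" using \<open>0 \<le> a\<close> \<open>a \<le> b\<close> by linarith
    ultimately show ?thesis using Q_step Q_bc \<open>W b - W c < \<delta>Q\<close> by blast
  qed
  moreover have "min \<delta>R \<delta>Q > 0" using \<open>\<delta>R > 0\<close> \<open>\<delta>Q > 0\<close> by simp
  ultimately show "\<exists>\<eta>'>0. \<exists>\<delta>>0. \<forall>a S c S'. (R OO Q) (a, S) (c, S') \<longrightarrow> 0 \<le> a \<longrightarrow> W a - W c < \<delta> \<longrightarrow>
      (\<forall>i\<in>S. v a i < \<eta>') \<longrightarrow> (\<forall>i\<in>S'. v c i < \<eta>)"
    using \<open>\<eta>' > 0\<close> by blast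
qed

lemma relpowp_forward:
  fixes R :: "real \<times> 'a \<Rightarrow> real \<times> 'a \<Rightarrow> bool"
  assumes "\<And>x y. R x y \<Longrightarrow> fst x \<le> fst y" "(R ^^ n) x y"
  shows "fst x \<le> fst y"
  using assms(2)
proof (induction n arbitrary: y)
  case (Suc n)
  then obtain w where "(R ^^ n) x w" "R w y" by auto
  then show ?case using Suc.IH assms(1) by (blast intro: order_trans)
qed simp

lemma propagates_relpowp:
  assumes "\<And>a b. 0 \<le> a \<Longrightarrow> a \<le> b \<Longrightarrow> W b \<le> W a"
    and "\<And>x y. R x y \<Longrightarrow> fst x \<le> fst y" and "propagates W v R"
  shows "propagates W v (R ^^ n)"
proof (induction n)
  case (Suc n)
  have "propagates W v (R ^^ n OO R)"
    by (rule propagates_relcompp[OF assms(1) relpowp_forward[OF assms(2)] assms(2) Suc assms(3)])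
  then show ?case by simp
qed (simp add: propagates_eq)

lemma propagates_finite_Ex:
  assumes "finite I" "\<And>k. k \<in> I \<Longrightarrow> propagates W v (R k)"
  shows "propagates W v (\<lambda>x y. \<exists>k\<in>I. R k x y)"
  using assms
proof (induction I rule: finite_induct)
  case empty
  show ?case unfolding propagates_def by (auto intro: exI[of _ 1])
next
  case (insert k I)
  show ?case unfolding propagates_def
  proof (intro allI impI)
    fix \<eta> :: real assume "\<eta> > 0"
    have "propagates W v (R k)" by (rule insert.prems) simp
    have "propagates W v (\<lambda>x y. \<exists>k\<in>I. R k x y)" by (rule insert.IH, rule insert.prems) simp
    from \<open>propagates W v (R k)\<close>[unfolded propagates_def, rule_format, OF \<open>\<eta> > 0\<close>]
    obtain \<eta>1 \<delta>1 where "\<eta>1 > 0" "\<delta>1 > 0" and P1: "\<forall>a S b S'. R k (a, S) (b, S') \<longrightarrow> 0 \<le> a \<longrightarrow>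
        W a - W b < \<delta>1 \<longrightarrow> (\<forall>i\<in>S. v a i < \<eta>1) \<longrightarrow> (\<forall>i\<in>S'. v b i < \<eta>)"
      by blast
    from \<open>propagates W v (\<lambda>x y. \<exists>k\<in>I. R k x y)\<close>[unfolded propagates_def, rule_format, OF \<open>\<eta> > 0\<close>]
    obtain \<eta>2 \<delta>2 where "\<eta>2 > 0" "\<delta>2 > 0" and P2: "\<forall>a S b S'. (\<exists>k\<in>I. R k (a, S) (b, S')) \<longrightarrow> 0 \<le> a \<longrightarrow>
        W a - W b < \<delta>2 \<longrightarrow> (\<forall>i\<in>S. v a i < \<eta>2) \<longrightarrow> (\<forall>i\<in>S'. v b i < \<eta>)"
      by blast
    have "\<forall>i\<in>S'. v b i < \<eta>"
      if R_ab: "\<exists>k\<in>insert k I. R k (a, S) (b, S')" and "0 \<le> a" and "W a - W b < min \<delta>1 \<delta>2"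
        and "\<forall>i\<in>S. v a i < min \<eta>1 \<eta>2" for a S b S'
    proof -
      have drop: "W a - W b < \<delta>1" "W a - W b < \<delta>2" using that(3) by simp_all
      have small: "\<forall>i\<in>S. v a i < \<eta>1" "\<forall>i\<in>S. v a i < \<eta>2" using that(4) by simp_all
      consider "R k (a, S) (b, S')" | "\<exists>k\<in>I. R k (a, S) (b, S')" using R_ab by blast
      then show ?thesis
      proof cases
        case 1
        then show ?thesis using P1 \<open>0 \<le> a\<close> drop(1) small(1) by blast
      next
        case 2
        then show ?thesis using P2 \<open>0 \<le> a\<close> drop(2) small(2) by blast
      qed
    qed
    then show "\<exists>\<eta>'>0. \<exists>\<delta>>0. \<forall>a S b S'. (\<exists>k\<in>insert k I. R k (a, S) (b, S')) \<longrightarrow> 0 \<le> a \<longrightarrow>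
        W a - W b < \<delta> \<longrightarrow> (\<forall>i\<in>S. v a i < \<eta>') \<longrightarrow> (\<forall>i\<in>S'. v b i < \<eta>)"
      using \<open>\<eta>1 > 0\<close> \<open>\<eta>2 > 0\<close> \<open>\<delta>1 > 0\<close> \<open>\<delta>2 > 0\<close>
      by (intro exI[of _ "min \<eta>1 \<eta>2"] conjI exI[of _ "min \<delta>1 \<delta>2"] allI impI) auto
  qed
qed

lemma relpowp_grows_to_UNIV:
  fixes R :: "'t \<times> 'i::finite set \<Rightarrow> 't \<times> 'i set \<Rightarrow> bool"
  assumes grow: "\<And>k S. \<exists>S'. R (\<tau> k, S) (\<tau> (Suc k), S') \<and> S \<subseteq> S' \<and> (S \<noteq> UNIV \<longrightarrow> S' \<noteq> S)"
  shows "(R ^^ CARD('i)) (\<tau> k, {}) (\<tau> (k + CARD('i)), UNIV)"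
proof -
  have "\<exists>S'. (R ^^ j) (\<tau> k, {}) (\<tau> (k + j), S') \<and> min j CARD('i) \<le> card S'" for j
  proof (induction j)
    case (Suc j)
    then obtain S where S: "(R ^^ j) (\<tau> k, {}) (\<tau> (k + j), S)" "min j CARD('i) \<le> card S" by blast
    obtain S' where S': "R (\<tau> (k + j), S) (\<tau> (Suc (k + j)), S')" "S \<subseteq> S'" "S \<noteq> UNIV \<longrightarrow> S' \<noteq> S"
      using grow by blast
    have "min (Suc j) CARD('i) \<le> card S'"
    proof (cases "S = UNIV")
      case False
      then have "card S < card S'" using S'(2,3) by (intro psubset_card_mono) auto
      then show ?thesis using S(2) by linarith
    next
      case True
      then have "S' = UNIV" using S'(2) by auto
      then show ?thesis by simp
    qed
    then show ?case using S(1) S'(1) by auto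
  qed simp
  from this[of "CARD('i)"]
  obtain S where "(R ^^ CARD('i)) (\<tau> k, {}) (\<tau> (k + CARD('i)), S)" "CARD('i) \<le> card S" by auto
  moreover have "S = UNIV" using \<open>CARD('i) \<le> card S\<close> card_seteq[of UNIV S] by auto
  ultimately show ?thesis by simp
qed

definition dwell_partition :: "(real \<Rightarrow> 'm) \<Rightarrow> real \<Rightarrow> real \<Rightarrow> real \<Rightarrow> nat \<Rightarrow> (nat \<Rightarrow> real) \<Rightarrow> bool" where
  "dwell_partition \<sigma> \<tau> a b s tt \<longleftrightarrow> tt 0 = a \<and> tt s = b \<and>
     (\<forall>l<s. tt l + \<tau> \<le> tt (Suc l) \<and> (\<forall>r\<in>{tt l..<tt (Suc l)}. \<sigma> r = \<sigma> (tt l)))"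

lemma admissible_switchingE:
  assumes "admissible_switching \<sigma> t"
  obtains \<tau> B where "\<tau> > 0" "t 0 = 0" "\<And>k. t k < t (Suc k)" "\<And>k. t (Suc k) - t k \<le> B"
    "\<And>k. \<exists>s tt. dwell_partition \<sigma> \<tau> (t k) (t (Suc k)) s tt"
  using assms unfolding admissible_switching_def dwell_partition_def by (auto simp: algebra_simps)

lemma dwell_partitionD:
  assumes "dwell_partition \<sigma> \<tau> a b s tt"
  shows "tt 0 = a" "tt s = b" "\<And>l. l < s \<Longrightarrow> tt l + \<tau> \<le> tt (Suc l)"
    "\<And>l r. l < s \<Longrightarrow> r \<in> {tt l..<tt (Suc l)} \<Longrightarrow> \<sigma> r = \<sigma> (tt l)"
  using assms unfolding dwell_partition_def by blast+

lemma dwell_partition_lower_bound: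
  assumes "dwell_partition \<sigma> \<tau> a b s tt" "l \<le> s"
  shows "a + real l * \<tau> \<le> tt l"
  using assms(2)
proof (induction l)
  case (Suc l)
  then have "tt l + \<tau> \<le> tt (Suc l)" using dwell_partitionD(3)[OF assms(1)] by simp
  then show ?case using Suc by (simp add: algebra_simps)
qed (simp add: dwell_partitionD(1)[OF assms(1)])

locale leader_following =
  fixes A :: "'m::finite \<Rightarrow> 'f::finite \<Rightarrow> 'f \<Rightarrow> real"
    and d :: "'m \<Rightarrow> 'f \<Rightarrow> real"
    and \<sigma> :: "real \<Rightarrow> 'm"
    and t :: "nat \<Rightarrow> real"
    and h :: "real^'n \<Rightarrow> real^'n"
    and z\<^sub>\<gamma> :: "real^'n"
    and V :: "real^'n \<Rightarrow> real"
    and gradV :: "real^'n \<Rightarrow> real^'n"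
    and q :: "real^'n \<Rightarrow> real^'p"
    and \<Psi> :: "real^'p^'p"
    and z :: "real \<Rightarrow> 'f \<Rightarrow> real^'n"
  assumes A_sym: "\<And>k i j. A k i j = A k j i"
    and A_nonneg: "\<And>k i j. A k i j \<ge> 0"
    and d_nonneg: "\<And>k i. d k i \<ge> 0"
    and switching: "admissible_switching \<sigma> t"
    and h_cont: "continuous_on UNIV h"
    and V_zero: "V 0 = 0"
    and V_pos: "\<And>x. x \<noteq> 0 \<Longrightarrow> V x > 0"
    and V_radial: "\<And>M. \<exists>R. \<forall>x. norm x \<ge> R \<longrightarrow> V x \<ge> M"
    and V_grad: "\<And>x. GDERIV V x :> gradV x"
    and q_cont: "continuous_on UNIV q"
    and q_zero: "\<And>\<alpha>. q \<alpha> = 0 \<longleftrightarrow> \<alpha> = 0"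
    and Psi_pd: "\<And>x. x \<noteq> 0 \<Longrightarrow> x \<bullet> (\<Psi> *v x) > 0"
    and h_monotone: "\<And>\<alpha> \<beta> \<gamma>.
          (gradV (\<alpha> - \<gamma>) - gradV (\<beta> - \<gamma>)) \<bullet> (h \<alpha> - h \<beta>)
          \<ge> (q (\<alpha> - \<gamma>) - q (\<beta> - \<gamma>)) \<bullet> (\<Psi> *v (q (\<alpha> - \<gamma>) - q (\<beta> - \<gamma>)))"
    and joint_conn: "\<And>k. jointly_connected A d \<sigma> (t k) (t (Suc k))"
    and z_cont: "\<And>i. continuous_on {0..} (\<lambda>s. z s i)"
    and z_ode: "\<And>i s. s \<ge> 0 \<Longrightarrow>
          ((\<lambda>r. z r i) has_vector_derivative
             ((\<Sum>j\<in>UNIV. A (\<sigma> s) i j *\<^sub>R (h (z s j) - h (z s i)))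
              + d (\<sigma> s) i *\<^sub>R (h z\<^sub>\<gamma> - h (z s i)))) (at s within {s..})"
begin

definition err :: "real \<Rightarrow> 'f \<Rightarrow> real^'n" where
  "err s i = z s i - z\<^sub>\<gamma>"

definition rhs :: "real \<Rightarrow> 'f \<Rightarrow> real^'n" where
  "rhs s i = (\<Sum>j\<in>UNIV. A (\<sigma> s) i j *\<^sub>R (h (z s j) - h (z s i))) + d (\<sigma> s) i *\<^sub>R (h z\<^sub>\<gamma> - h (z s i))"

definition lyap :: "'f set \<Rightarrow> real \<Rightarrow> real" where
  "lyap C s = (\<Sum>i\<in>C. V (err s i))"

abbreviation W :: "real \<Rightarrow> real" where
  "W \<equiv> lyap UNIV"

definition quad :: "real^'p \<Rightarrow> real" where
  "quad y = y \<bullet> (\<Psi> *v y)"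

definition edge_diss :: "real \<Rightarrow> 'f \<Rightarrow> 'f \<Rightarrow> real" where
  "edge_diss s i j = (gradV (err s i) - gradV (err s j)) \<bullet> (h (z s i) - h (z s j))"

definition leader_diss :: "real \<Rightarrow> 'f \<Rightarrow> real" where
  "leader_diss s i = gradV (err s i) \<bullet> (h (z s i) - h z\<^sub>\<gamma>)"

definition dissipation :: "'f set \<Rightarrow> real \<Rightarrow> real" where
  "dissipation C s = (\<Sum>i\<in>C. \<Sum>j\<in>C. A (\<sigma> s) i j * edge_diss s i j) / 2
     + (\<Sum>i\<in>C. d (\<sigma> s) i * leader_diss s i)"

definition closed_under :: "'m \<Rightarrow> 'f set \<Rightarrow> bool" where
  "closed_under m C \<longleftrightarrow> (\<forall>i\<in>C. \<forall>j. A m i j \<noteq> 0 \<longrightarrow> j \<in> C)"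

lemma V_nonneg: "V x \<ge> 0"
  using V_pos[of x] V_zero by (cases "x = 0") auto

lemma V_has_derivative: "(V has_derivative (\<lambda>v. v \<bullet> gradV x)) (at x)"
  using V_grad[of x] unfolding gderiv_def .

lemma V_continuous: "continuous_on UNIV V"
  using V_has_derivative has_derivative_continuous continuous_at_imp_continuous_on by blast

lemma gradV_zero: "gradV 0 = 0"
proof -
  have "(\<lambda>v. v \<bullet> gradV 0) = (\<lambda>v. 0)"
    by (rule has_derivative_local_min[OF V_has_derivative]) (auto simp: V_zero V_nonneg)
  then have "gradV 0 \<bullet> gradV 0 = 0" by meson
  then show ?thesis by simp
qed

lemma quad_nonneg: "quad y \<ge> 0"
  using Psi_pd[of y] by (cases "y = 0") (auto simp: quad_def)

lemma quad_le_edge_diss: "quad (q (err s i) - q (err s j)) \<le> edge_diss s i j"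
  using h_monotone[of "z s i" z\<^sub>\<gamma> "z s j"] by (simp add: edge_diss_def quad_def err_def)

lemma quad_le_leader_diss: "quad (q (err s i)) \<le> leader_diss s i"
  using h_monotone[of "z s i" z\<^sub>\<gamma> z\<^sub>\<gamma>] q_zero[of 0]
  by (simp add: leader_diss_def quad_def err_def gradV_zero)

lemma edge_diss_nonneg: "edge_diss s i j \<ge> 0"
  using quad_le_edge_diss quad_nonneg order_trans by blast

lemma leader_diss_nonneg: "leader_diss s i \<ge> 0"
  using quad_le_leader_diss quad_nonneg order_trans by blast

lemma dissipation_nonneg: "dissipation C s \<ge> 0"
  unfolding dissipation_def
  by (intro add_nonneg_nonneg divide_nonneg_pos sum_nonneg mult_nonneg_nonneg)
    (auto simp: A_nonneg d_nonneg edge_diss_nonneg leader_diss_nonneg)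

text \<open>The symmetry of \<open>A\<close> pairs the terms for \<open>(i, j)\<close> and \<open>(j, i)\<close> into \<open>edge_diss\<close>; closedness
  of \<open>C\<close> lets the sum over neighbours stay inside \<open>C\<close>.\<close>

lemma sum_gradV_rhs:
  assumes "closed_under (\<sigma> s) C"
  shows "(\<Sum>i\<in>C. gradV (err s i) \<bullet> rhs s i) = - dissipation C s"
proof -
  define a where "a i j = A (\<sigma> s) i j" for i j
  define g where "g i = gradV (err s i)" for i
  define y where "y i = h (z s i)" for i
  have g_rhs: "g i \<bullet> rhs s i = (\<Sum>j\<in>UNIV. a i j * (g i \<bullet> (y j - y i))) - d (\<sigma> s) i * leader_diss s i"
    for i
    unfolding rhs_def leader_diss_def a_def g_def y_def
    by (simp add: inner_sum_right inner_add_right inner_diff_right algebra_simps)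
  have "(\<Sum>j\<in>UNIV. a i j * (g i \<bullet> (y j - y i))) = (\<Sum>j\<in>C. a i j * (g i \<bullet> (y j - y i)))"
    if "i \<in> C" for i
    by (rule sum.mono_neutral_right) (use assms that in \<open>auto simp: closed_under_def a_def\<close>)
  then have "(\<Sum>i\<in>C. g i \<bullet> rhs s i)
      = (\<Sum>i\<in>C. \<Sum>j\<in>C. a i j * (g i \<bullet> (y j - y i))) - (\<Sum>i\<in>C. d (\<sigma> s) i * leader_diss s i)"
    by (simp add: g_rhs sum_subtractf)
  moreover have "(\<Sum>i\<in>C. \<Sum>j\<in>C. a i j * (g i \<bullet> (y j - y i)))
      = (\<Sum>i\<in>C. \<Sum>j\<in>C. a i j * (g j \<bullet> (y i - y j)))"
    by (subst sum.swap) (simp add: a_def A_sym)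
  moreover have "(\<Sum>i\<in>C. \<Sum>j\<in>C. a i j * (g i \<bullet> (y j - y i))) + (\<Sum>i\<in>C. \<Sum>j\<in>C. a i j * (g j \<bullet> (y i - y j)))
      = - (\<Sum>i\<in>C. \<Sum>j\<in>C. a i j * edge_diss s i j)"
    unfolding edge_diss_def a_def g_def y_def
    by (simp add: sum.distrib[symmetric] sum_negf[symmetric] inner_diff_left inner_diff_right algebra_simps)
  ultimately show ?thesis unfolding dissipation_def a_def g_def by linarith
qed

lemma lyap_has_derivative:
  assumes "s \<ge> 0" "closed_under (\<sigma> s) C"
  shows "(lyap C has_real_derivative - dissipation C s) (at s within {s..})"
proof -
  have "((\<lambda>r. V (err r i)) has_real_derivative (gradV (err s i) \<bullet> rhs s i)) (at s within {s..})" for i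
  proof -
    have "((\<lambda>r. err r i) has_derivative (\<lambda>x. x *\<^sub>R rhs s i)) (at s within {s..})"
      using z_ode[OF assms(1), of i] unfolding has_vector_derivative_def rhs_def err_def
      by (auto intro!: derivative_eq_intros)
    from has_derivative_compose[OF this V_has_derivative]
    show ?thesis by (rule has_derivative_imp_has_field_derivative) (simp add: inner_commute)
  qed
  then have "(lyap C has_real_derivative (\<Sum>i\<in>C. gradV (err s i) \<bullet> rhs s i)) (at s within {s..})"
    unfolding lyap_def[abs_def] by (rule DERIV_sum)
  then show ?thesis unfolding sum_gradV_rhs[OF assms(2)] .
qed

lemma lyap_continuous: "continuous_on {0..} (lyap C)"
  unfolding lyap_def[abs_def] err_def
  by (intro continuous_intros continuous_on_compose2[OF V_continuous] z_cont) auto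

lemma lyap_decrease:
  assumes "0 \<le> a" "a \<le> b" "\<And>r. r \<in> {a..<b} \<Longrightarrow> closed_under (\<sigma> r) C"
    and "\<And>r. r \<in> {a..<b} \<Longrightarrow> c \<le> dissipation C r"
  shows "lyap C b + c * (b - a) \<le> lyap C a"
proof -
  have "lyap C b + c * b \<le> lyap C a + c * a"
  proof (rule right_DERIV_nonpos_imp_le[OF assms(2), of _ "\<lambda>r. c - dissipation C r"])
    show "continuous_on {a..b} (\<lambda>s. lyap C s + c * s)"
      by (intro continuous_intros continuous_on_subset[OF lyap_continuous]) (use assms in auto)
  next
    fix r assume r: "r \<in> {a..<b}"
    show "((\<lambda>s. lyap C s + c * s) has_real_derivative c - dissipation C r) (at r within {r..})"
      using lyap_has_derivative[of r C] assms(1,3) r by (auto intro!: derivative_eq_intros)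
    show "c - dissipation C r \<le> 0" using assms(4)[OF r] by simp
  qed
  then show ?thesis by (simp add: algebra_simps)
qed

lemma lyap_antitone:
  assumes "0 \<le> a" "a \<le> b" "\<And>r. r \<in> {a..<b} \<Longrightarrow> closed_under (\<sigma> r) C"
  shows "lyap C b \<le> lyap C a"
  using lyap_decrease[OF assms, of 0] dissipation_nonneg by simp

lemma W_antitone: "0 \<le> a \<Longrightarrow> a \<le> b \<Longrightarrow> W b \<le> W a"
  by (rule lyap_antitone) (auto simp: closed_under_def)

lemma V_err_le_lyap: "i \<in> C \<Longrightarrow> V (err s i) \<le> lyap C s"
  unfolding lyap_def by (rule member_le_sum) (auto simp: V_nonneg)

lemma lyap_less:
  assumes "C \<noteq> {}" "\<And>i. i \<in> C \<Longrightarrow> V (err s i) < \<epsilon>"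
  shows "lyap C s < real CARD('f) * \<epsilon>"
proof -
  have "lyap C s < (\<Sum>i\<in>C. \<epsilon>)"
    unfolding lyap_def using assms by (intro sum_strict_mono) auto
  also have "\<dots> \<le> real CARD('f) * \<epsilon>"
  proof -
    obtain i where "i \<in> C" using assms(1) by blast
    then have "0 \<le> \<epsilon>" using assms(2)[of i] V_nonneg[of "err s i"] by linarith
    moreover have "card C \<le> CARD('f)" by (rule card_mono) auto
    ultimately show ?thesis by (simp add: mult_right_mono)
  qed
  finally show ?thesis .
qed

lemma err_bounded: "\<exists>R. \<forall>s\<ge>0. \<forall>i. norm (err s i) \<le> R"
proof -
  obtain R where R: "\<And>x. R \<le> norm x \<Longrightarrow> W 0 + 1 \<le> V x" using V_radial[of "W 0 + 1"] by blast
  have "norm (err s i) \<le> R" if "0 \<le> s" for s i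
  proof (rule ccontr)
    assume "\<not> ?thesis"
    then have "W 0 + 1 \<le> V (err s i)" using R by simp
    moreover have "V (err s i) \<le> W s" by (rule V_err_le_lyap) simp
    moreover have "W s \<le> W 0" using W_antitone that by simp
    ultimately show False by simp
  qed
  then show ?thesis by blast
qed

lemma rhs_bounded: "\<exists>M>0. \<forall>s\<ge>0. \<forall>i. norm (rhs s i) \<le> M"
proof -
  obtain R where R: "\<And>s i. 0 \<le> s \<Longrightarrow> norm (err s i) \<le> R" using err_bounded by blast
  define K where "K = cball z\<^sub>\<gamma> R"
  have "compact (h ` K)"
    unfolding K_def by (rule compact_continuous_image) (auto intro: continuous_on_subset[OF h_cont])
  then obtain H where "H > 0" and H: "\<And>x. x \<in> K \<Longrightarrow> norm (h x) \<le> H"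
    using compact_imp_bounded[of "h ` K"] unfolding bounded_pos by auto
  have z_in_K: "z s i \<in> K" if "0 \<le> s" for s i
    using R[OF that, of i] by (simp add: K_def dist_norm err_def norm_minus_commute)
  then have "z\<^sub>\<gamma> \<in> K" by (simp add: K_def) (metis R order.trans norm_ge_zero order_refl)
  have h_diff: "norm (h x - h y) \<le> 2 * H" if "x \<in> K" "y \<in> K" for x y
    using norm_triangle_ineq4[of "h x" "h y"] H[OF that(1)] H[OF that(2)] by simp
  define row where "row p = (\<Sum>j\<in>UNIV. A (fst p) (snd p) j) + d (fst p) (snd p)" for p
  define B where "B = Max (range row)"
  have row_le: "row (m, i) \<le> B" for m i unfolding B_def by (rule Max_ge) auto
  have "0 \<le> B" using row_le[of undefined undefined]
    by (simp add: row_def) (metis A_nonneg add_nonneg_nonneg d_nonneg order.trans sum_nonneg)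
  have "norm (rhs s i) \<le> B * (2 * H)" if "0 \<le> s" for s i
  proof -
    have "norm (rhs s i) \<le> (\<Sum>j\<in>UNIV. norm (A (\<sigma> s) i j *\<^sub>R (h (z s j) - h (z s i))))
        + norm (d (\<sigma> s) i *\<^sub>R (h z\<^sub>\<gamma> - h (z s i)))"
      unfolding rhs_def by (rule order_trans[OF norm_triangle_ineq add_right_mono[OF norm_sum]])
    also have "\<dots> \<le> (\<Sum>j\<in>UNIV. A (\<sigma> s) i j * (2 * H)) + d (\<sigma> s) i * (2 * H)"
      using A_nonneg d_nonneg h_diff z_in_K[OF that] \<open>z\<^sub>\<gamma> \<in> K\<close>
      by (intro add_mono sum_mono) (auto intro!: mult_left_mono)
    also have "\<dots> = row (\<sigma> s, i) * (2 * H)"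
      by (simp add: row_def sum_distrib_right distrib_right)
    also have "\<dots> \<le> B * (2 * H)" using row_le \<open>H > 0\<close> by (intro mult_right_mono) auto
    finally show ?thesis .
  qed
  moreover have "0 < B * (2 * H) + 1"
    using \<open>0 \<le> B\<close> \<open>H > 0\<close> by (simp add: add_nonneg_pos)
  ultimately show ?thesis by (metis add_increasing2 zero_le_one)
qed

lemma err_lipschitz:
  assumes "0 \<le> a" "a \<le> b" "\<And>s i. 0 \<le> s \<Longrightarrow> norm (rhs s i) \<le> M"
  shows "norm (err b i - err a i) \<le> M * (b - a)"
proof -
  have "norm (z b i - z a i) \<le> M * (b - a)"
  proof (rule right_vector_DERIV_bound_imp_lipschitz[OF assms(2), of _ "\<lambda>s. rhs s i"])
    show "continuous_on {a..b} (\<lambda>s. z s i)"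
      by (rule continuous_on_subset[OF z_cont]) (use assms in auto)
    fix r assume "r \<in> {a..<b}"
    then have "0 \<le> r" using assms by auto
    then show "((\<lambda>s. z s i) has_vector_derivative rhs r i) (at r within {r..})"
      unfolding rhs_def by (rule z_ode)
    show "norm (rhs r i) \<le> M" using assms(3)[OF \<open>0 \<le> r\<close>] .
  qed
  then show ?thesis by (simp add: err_def)
qed

text \<open>Node \<open>None\<close> is the leader; its tracking error is \<open>0\<close>, whence its \<open>q\<close>-value.\<close>

definition weight :: "'m \<Rightarrow> 'f option \<Rightarrow> 'f option \<Rightarrow> real" where
  "weight m u v = (case (u, v) of
        (Some i, Some j) \<Rightarrow> A m i j
      | (None, Some i) \<Rightarrow> d m i
      | (Some i, None) \<Rightarrow> d m i
      | (None, None) \<Rightarrow> 0)"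

definition adj :: "'m \<Rightarrow> 'f option \<Rightarrow> 'f option \<Rightarrow> bool" where
  "adj m u v \<longleftrightarrow> 0 < weight m u v"

definition node_q :: "real \<Rightarrow> 'f option \<Rightarrow> real^'p" where
  "node_q s u = (case u of None \<Rightarrow> 0 | Some i \<Rightarrow> q (err s i))"

definition reach_set :: "'m \<Rightarrow> 'f set \<Rightarrow> 'f set" where
  "reach_set m S = {i. \<exists>u\<in>insert None (Some ` S). (adj m)\<^sup>*\<^sup>* u (Some i)}"

lemma edge_term_le_dissipation: "A (\<sigma> s) i j * edge_diss s i j \<le> 2 * dissipation UNIV s"
proof -
  have "A (\<sigma> s) i j * edge_diss s i j \<le> (\<Sum>j\<in>UNIV. A (\<sigma> s) i j * edge_diss s i j)"
    by (rule member_le_sum) (auto intro!: mult_nonneg_nonneg A_nonneg edge_diss_nonneg)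
  also have "\<dots> \<le> (\<Sum>i\<in>UNIV. \<Sum>j\<in>UNIV. A (\<sigma> s) i j * edge_diss s i j)"
    by (rule member_le_sum[where f="\<lambda>i. \<Sum>j\<in>UNIV. A (\<sigma> s) i j * edge_diss s i j"])
      (auto intro!: sum_nonneg mult_nonneg_nonneg A_nonneg edge_diss_nonneg)
  also have "\<dots> \<le> 2 * dissipation UNIV s"
    unfolding dissipation_def
    using sum_nonneg[of UNIV "\<lambda>i. d (\<sigma> s) i * leader_diss s i"] d_nonneg leader_diss_nonneg
    by (auto simp: algebra_simps)
  finally show ?thesis .
qed

lemma leader_term_le_dissipation: "d (\<sigma> s) i * leader_diss s i \<le> dissipation UNIV s"
proof -
  have "d (\<sigma> s) i * leader_diss s i \<le> (\<Sum>i\<in>UNIV. d (\<sigma> s) i * leader_diss s i)"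
    by (rule member_le_sum) (auto intro!: mult_nonneg_nonneg d_nonneg leader_diss_nonneg)
  moreover have "0 \<le> (\<Sum>i\<in>UNIV. \<Sum>j\<in>UNIV. A (\<sigma> s) i j * edge_diss s i j)"
    by (auto intro!: sum_nonneg mult_nonneg_nonneg A_nonneg edge_diss_nonneg)
  ultimately show ?thesis unfolding dissipation_def by simp
qed

lemma quad_uminus: "quad (- y) = quad y"
proof -
  have "\<Psi> *v (- y) = - (\<Psi> *v y)" using matrix_vector_mult_scaleR[of \<Psi> "-1" y] by simp
  then show ?thesis by (simp add: quad_def)
qed

lemma weight_quad_le_dissipation:
  "weight (\<sigma> s) u v * quad (node_q s u - node_q s v) \<le> 2 * dissipation UNIV s"
proof -
  have leader: "d (\<sigma> s) i * quad (q (err s i)) \<le> 2 * dissipation UNIV s" for i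
  proof -
    have "d (\<sigma> s) i * quad (q (err s i)) \<le> d (\<sigma> s) i * leader_diss s i"
      using quad_le_leader_diss d_nonneg by (rule mult_left_mono)
    also have "\<dots> \<le> 2 * dissipation UNIV s"
      using leader_term_le_dissipation[of s i] dissipation_nonneg[of UNIV s] by linarith
    finally show ?thesis .
  qed
  show ?thesis
  proof (cases u; cases v)
    fix i j assume "u = Some i" "v = Some j"
    have "A (\<sigma> s) i j * quad (q (err s i) - q (err s j)) \<le> A (\<sigma> s) i j * edge_diss s i j"
      using quad_le_edge_diss A_nonneg by (rule mult_left_mono)
    then show ?thesis
      using edge_term_le_dissipation[of s i j] \<open>u = _\<close> \<open>v = _\<close> by (simp add: weight_def node_q_def)
  next
    fix i assume "u = None" "v = Some i"
    then show ?thesis using leader[of i] by (simp add: weight_def node_q_def quad_uminus)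
  next
    fix i assume "u = Some i" "v = None"
    then show ?thesis using leader[of i] by (simp add: weight_def node_q_def)
  qed (simp add: weight_def dissipation_nonneg)
qed

lemma small_dissipation_imp_node_q_close:
  assumes "\<epsilon> > 0"
  shows "\<exists>c>0. \<forall>s u v. dissipation UNIV s < c \<longrightarrow> (adj (\<sigma> s))\<^sup>*\<^sup>* u v \<longrightarrow>
    norm (node_q s v - node_q s u) < \<epsilon>"
proof -
  obtain w0 where "w0 > 0" and w0: "\<And>p. 0 < (\<lambda>(m, u, v). weight m u v) p \<Longrightarrow> w0 \<le> (\<lambda>(m, u, v). weight m u v) p"
    using finite_pos_values_bounded_below[of "\<lambda>(m, u, v). weight m u v"] by blast
  obtain \<kappa> where "\<kappa> > 0" and \<kappa>: "\<And>y. \<kappa> * (norm y)\<^sup>2 \<le> quad y"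
    using pos_def_quadratic_form_lower_bound[OF Psi_pd] unfolding quad_def by blast
  define K where "K = real CARD('f option \<times> 'f option)"
  define \<epsilon>' where "\<epsilon>' = \<epsilon> / (K + 1)"
  have "0 \<le> K" by (simp add: K_def)
  then have "\<epsilon>' > 0" "K * \<epsilon>' < \<epsilon>"
    using \<open>\<epsilon> > 0\<close> by (simp_all add: \<epsilon>'_def field_simps)
  define c where "c = w0 * \<kappa> * \<epsilon>'\<^sup>2 / 2"
  have "norm (node_q s v - node_q s u) < \<epsilon>"
    if small: "dissipation UNIV s < c" and path: "(adj (\<sigma> s))\<^sup>*\<^sup>* u v" for s u v
  proof -
    have "norm (node_q s x - node_q s y) \<le> \<epsilon>'" if "adj (\<sigma> s) x y" for x y
    proof -
      let ?y = "node_q s x - node_q s y"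
      have "w0 \<le> weight (\<sigma> s) x y" using w0[of "(\<sigma> s, x, y)"] that by (simp add: adj_def)
      then have "w0 * (\<kappa> * (norm ?y)\<^sup>2) \<le> weight (\<sigma> s) x y * quad ?y"
        using \<open>w0 > 0\<close> \<open>\<kappa> > 0\<close> \<kappa>[of ?y] by (intro mult_mono) auto
      also have "\<dots> < w0 * (\<kappa> * \<epsilon>'\<^sup>2)"
        using weight_quad_le_dissipation[of s x y] small by (simp add: c_def)
      finally have "(norm ?y)\<^sup>2 < \<epsilon>'\<^sup>2" using \<open>w0 > 0\<close> \<open>\<kappa> > 0\<close> by simp
      then show ?thesis using \<open>\<epsilon>' > 0\<close> by (simp add: power_less_imp_less_base less_imp_le)
    qed
    then have "norm (node_q s v - node_q s u) \<le> K * \<epsilon>'"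
      unfolding K_def by (rule rtranclp_norm_diff_le[OF path]) (use \<open>\<epsilon>' > 0\<close> in auto)
    then show ?thesis using \<open>K * \<epsilon>' < \<epsilon>\<close> by linarith
  qed
  moreover have "c > 0" using \<open>w0 > 0\<close> \<open>\<kappa> > 0\<close> \<open>\<epsilon>' > 0\<close> by (simp add: c_def)
  ultimately show ?thesis by blast
qed

lemma component_closed_under: "closed_under m {k. (adj m)\<^sup>*\<^sup>* u (Some k)}"
  unfolding closed_under_def
proof (intro ballI allI impI)
  fix k j assume "k \<in> {k. (adj m)\<^sup>*\<^sup>* u (Some k)}" "A m k j \<noteq> 0"
  moreover have "adj m (Some k) (Some j)"
    using \<open>A m k j \<noteq> 0\<close> A_nonneg[of m k j] by (simp add: adj_def weight_def)
  ultimately show "j \<in> {k. (adj m)\<^sup>*\<^sup>* u (Some k)}" by (simp add: rtranclp.rtrancl_into_rtrancl)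
qed

lemma exists_small_dissipation:
  assumes "0 \<le> a" "0 < w" "W a - W (a + w) < c * w"
  shows "\<exists>s\<in>{a..<a + w}. dissipation UNIV s < c"
proof (rule ccontr)
  assume "\<not> ?thesis"
  then have "W (a + w) + c * (a + w - a) \<le> W a"
    using assms(1,2) by (intro lyap_decrease) (auto simp: closed_under_def not_less)
  then show False using assms(3) by simp
qed

lemma err_small_at_small_dissipation:
  assumes "\<eta> > 0"
  shows "\<exists>\<eta>'>0. \<exists>c>0. \<forall>s S. 0 \<le> s \<longrightarrow> dissipation UNIV s < c \<longrightarrow> (\<forall>j\<in>S. norm (err s j) < \<eta>') \<longrightarrow>
    (\<forall>i\<in>reach_set (\<sigma> s) S. norm (err s i) < \<eta>)"
proof -
  obtain R where R: "\<And>s i. 0 \<le> s \<Longrightarrow> norm (err s i) \<le> R" using err_bounded by blast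
  obtain \<mu> where "\<mu> > 0" and \<mu>: "\<forall>x\<in>cball 0 R. norm (q x) < \<mu> \<longrightarrow> norm x < \<eta>"
    using small_value_imp_small_arg[of R q \<eta>] continuous_on_subset[OF q_cont] q_zero \<open>\<eta> > 0\<close> by auto
  obtain \<rho> where "\<rho> > 0" and \<rho>: "\<forall>x. norm x < \<rho> \<longrightarrow> norm (q x) < \<mu> / 2"
    using continuous_vanishing_at_zero[OF q_cont, of "\<mu> / 2"] q_zero \<open>\<mu> > 0\<close> by auto
  obtain c where "c > 0" and c: "\<forall>s u v. dissipation UNIV s < c \<longrightarrow> (adj (\<sigma> s))\<^sup>*\<^sup>* u v \<longrightarrow>
      norm (node_q s v - node_q s u) < \<mu> / 2"
    using small_dissipation_imp_node_q_close[of "\<mu> / 2"] \<open>\<mu> > 0\<close> by auto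
  have "norm (err s i) < \<eta>"
    if "0 \<le> s" and small_diss: "dissipation UNIV s < c" and small_S: "\<forall>j\<in>S. norm (err s j) < \<rho>"
      and reached: "i \<in> reach_set (\<sigma> s) S" for s S i
  proof -
    obtain u where u: "u \<in> insert None (Some ` S)" "(adj (\<sigma> s))\<^sup>*\<^sup>* u (Some i)"
      using reached by (auto simp: reach_set_def)
    have "norm (node_q s u) < \<mu> / 2" using u(1) small_S \<rho> \<open>\<mu> > 0\<close> by (auto simp: node_q_def)
    moreover have "norm (node_q s (Some i) - node_q s u) < \<mu> / 2" using c small_diss u(2) by blast
    ultimately have "norm (q (err s i)) < \<mu>"
      using norm_triangle_ineq[of "node_q s (Some i) - node_q s u" "node_q s u"] by (simp add: node_q_def)
    then show ?thesis using \<mu> R[OF \<open>0 \<le> s\<close>, of i] by simp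
  qed
  then show ?thesis using \<open>\<rho> > 0\<close> \<open>c > 0\<close> by blast
qed

lemma reach_set_stays_small:
  assumes "0 \<le> s" "s \<le> b" "\<And>r. r \<in> {s..<b} \<Longrightarrow> \<sigma> r = m"
    and "\<And>k. k \<in> reach_set m S \<Longrightarrow> V (err s k) < \<epsilon>" and "i \<in> reach_set m S"
  shows "V (err b i) < real CARD('f) * \<epsilon>"
proof -
  obtain u where u: "u \<in> insert None (Some ` S)" "(adj m)\<^sup>*\<^sup>* u (Some i)"
    using assms(5) by (auto simp: reach_set_def)
  define C where "C = {k. (adj m)\<^sup>*\<^sup>* u (Some k)}"
  have "C \<subseteq> reach_set m S" "i \<in> C" using u by (auto simp: C_def reach_set_def)
  have "V (err b i) \<le> lyap C b" using \<open>i \<in> C\<close> by (rule V_err_le_lyap)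
  also have "\<dots> \<le> lyap C s"
    using assms(1-3) component_closed_under[of m u] by (intro lyap_antitone) (auto simp: C_def)
  also have "\<dots> < real CARD('f) * \<epsilon>"
    using \<open>i \<in> C\<close> \<open>C \<subseteq> reach_set m S\<close> assms(4) by (intro lyap_less) auto
  finally show ?thesis .
qed

lemma err_small_shortly_after:
  assumes "\<eta> > 0"
  shows "\<exists>\<eta>'>0. \<exists>w>0. \<forall>a s i. 0 \<le> a \<longrightarrow> a \<le> s \<longrightarrow> s \<le> a + w \<longrightarrow> V (err a i) < \<eta>' \<longrightarrow>
    norm (err s i) < \<eta>"
proof -
  obtain R where R: "\<And>s i. 0 \<le> s \<Longrightarrow> norm (err s i) \<le> R" using err_bounded by blast
  obtain \<eta>' where "\<eta>' > 0" and \<eta>': "\<forall>x\<in>cball 0 R. norm (V x) < \<eta>' \<longrightarrow> norm x < \<eta> / 2"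
    using small_value_imp_small_arg[of R V "\<eta> / 2"] continuous_on_subset[OF V_continuous] V_pos
      \<open>\<eta> > 0\<close> by fastforce
  obtain M where "M > 0" and M: "\<And>s i. 0 \<le> s \<Longrightarrow> norm (rhs s i) \<le> M" using rhs_bounded by blast
  define w where "w = \<eta> / (2 * M)"
  have "norm (err s i) < \<eta>" if "0 \<le> a" "a \<le> s" "s \<le> a + w" "V (err a i) < \<eta>'" for a s i
  proof -
    have "norm (err a i) < \<eta> / 2" using \<eta>' R[OF \<open>0 \<le> a\<close>, of i] that(4) V_nonneg by auto
    moreover have "norm (err s i - err a i) \<le> M * (s - a)" by (rule err_lipschitz[OF that(1,2) M])
    moreover have "M * (s - a) \<le> M * w" using that(3) \<open>M > 0\<close> by simp
    moreover have "M * w = \<eta> / 2" using \<open>M > 0\<close> by (simp add: w_def)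
    ultimately show ?thesis using norm_triangle_ineq[of "err s i - err a i" "err a i"] by simp
  qed
  moreover have "w > 0" using \<open>\<eta> > 0\<close> \<open>M > 0\<close> by (simp add: w_def)
  ultimately show ?thesis using \<open>\<eta>' > 0\<close> by blast
qed

definition dwell_step :: "real \<Rightarrow> real \<times> 'f set \<Rightarrow> real \<times> 'f set \<Rightarrow> bool" where
  "dwell_step \<tau> x y \<longleftrightarrow> fst x + \<tau> \<le> fst y \<and> (\<forall>r\<in>{fst x..<fst y}. \<sigma> r = \<sigma> (fst x)) \<and>
     snd y = reach_set (\<sigma> (fst x)) (snd x)"

lemma dwell_stepD:
  assumes "dwell_step \<tau> (a, S) (b, S')"
  shows "a + \<tau> \<le> b" "\<And>r. r \<in> {a..<b} \<Longrightarrow> \<sigma> r = \<sigma> a" "S' = reach_set (\<sigma> a) S"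
  using assms unfolding dwell_step_def fst_conv snd_conv by blast+

text \<open>Over a dwell interval the Lyapunov function hardly decreases only if the dissipation is small
  at some early instant \<open>s\<close>; then the errors are small at \<open>s\<close> on all nodes reachable from the
  leader or from the small-error set, and the Lyapunov sum of each such component cannot increase
  up to \<open>b\<close>.\<close>

lemma propagates_dwell_step:
  assumes "\<tau> > 0"
  shows "propagates W (\<lambda>s i. V (err s i)) (dwell_step \<tau>)"
  unfolding propagates_def
proof (intro allI impI)
  fix \<eta> :: real assume "\<eta> > 0"
  define N where "N = real CARD('f)"
  have "N > 0" by (simp add: N_def)
  obtain \<rho> where "\<rho> > 0" and \<rho>: "\<forall>x. norm x < \<rho> \<longrightarrow> norm (V x) < \<eta> / N"
    using continuous_vanishing_at_zero[OF V_continuous V_zero, of "\<eta> / N"] \<open>\<eta> > 0\<close> \<open>N > 0\<close> by auto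
  obtain \<eta>1 c where "\<eta>1 > 0" "c > 0" and at_small_diss: "\<forall>s S. 0 \<le> s \<longrightarrow> dissipation UNIV s < c \<longrightarrow>
      (\<forall>j\<in>S. norm (err s j) < \<eta>1) \<longrightarrow> (\<forall>i\<in>reach_set (\<sigma> s) S. norm (err s i) < \<rho>)"
    using err_small_at_small_dissipation[OF \<open>\<rho> > 0\<close>] by blast
  obtain \<eta>' w0 where "\<eta>' > 0" "w0 > 0" and shortly: "\<forall>a s i. 0 \<le> a \<longrightarrow> a \<le> s \<longrightarrow> s \<le> a + w0 \<longrightarrow>
      V (err a i) < \<eta>' \<longrightarrow> norm (err s i) < \<eta>1"
    using err_small_shortly_after[OF \<open>\<eta>1 > 0\<close>] by blast
  define w where "w = min \<tau> w0"
  have "0 < w" "w \<le> \<tau>" "w \<le> w0" using \<open>\<tau> > 0\<close> \<open>w0 > 0\<close> by (auto simp: w_def)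
  have "\<forall>i\<in>S'. V (err b i) < \<eta>"
    if step: "dwell_step \<tau> (a, S) (b, S')" and "0 \<le> a" and drop: "W a - W b < c * w"
      and small: "\<forall>i\<in>S. V (err a i) < \<eta>'" for a S b S'
  proof -
    have "a + w \<le> b" using dwell_stepD(1)[OF step] \<open>w \<le> \<tau>\<close> by linarith
    then have "W b \<le> W (a + w)" using \<open>0 \<le> a\<close> \<open>0 < w\<close> by (intro W_antitone) auto
    then have "W a - W (a + w) < c * w" using drop by linarith
    then obtain s where s: "s \<in> {a..<a + w}" "dissipation UNIV s < c"
      using exists_small_dissipation[OF \<open>0 \<le> a\<close> \<open>0 < w\<close>] by blast
    then have "0 \<le> s" "s \<le> b" using \<open>0 \<le> a\<close> \<open>a + w \<le> b\<close> by auto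
    have \<sigma>_s: "\<sigma> r = \<sigma> a" if "r \<in> {s..<b}" for r
      by (rule dwell_stepD(2)[OF step]) (use that s(1) in auto)
    have "a \<le> s" "s \<le> a + w0" using s(1) \<open>w \<le> w0\<close> by auto
    then have "\<forall>j\<in>S. norm (err s j) < \<eta>1" using shortly \<open>0 \<le> a\<close> small by blast
    moreover have "\<sigma> s = \<sigma> a" using s(1) \<open>a + w \<le> b\<close> by (intro \<sigma>_s) auto
    ultimately have "\<forall>k\<in>reach_set (\<sigma> a) S. norm (err s k) < \<rho>"
      using at_small_diss \<open>0 \<le> s\<close> s(2) by metis
    then have "\<forall>k\<in>reach_set (\<sigma> a) S. V (err s k) < \<eta> / N" using \<rho> by auto
    then have "\<forall>i\<in>reach_set (\<sigma> a) S. V (err b i) < N * (\<eta> / N)"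
      unfolding N_def using \<sigma>_s by (blast intro: reach_set_stays_small[OF \<open>0 \<le> s\<close> \<open>s \<le> b\<close>])
    then show ?thesis using dwell_stepD(3)[OF step] \<open>N > 0\<close> by simp
  qed
  then show "\<exists>\<eta>'>0. \<exists>\<delta>>0. \<forall>a S b S'. dwell_step \<tau> (a, S) (b, S') \<longrightarrow> 0 \<le> a \<longrightarrow>
      W a - W b < \<delta> \<longrightarrow> (\<forall>i\<in>S. V (err a i) < \<eta>') \<longrightarrow> (\<forall>i\<in>S'. V (err b i) < \<eta>)"
    using \<open>\<eta>' > 0\<close> \<open>c > 0\<close> \<open>0 < w\<close> by (intro exI[of _ \<eta>'] conjI exI[of _ "c * w"] allI impI) auto
qed

primrec reach_along :: "(nat \<Rightarrow> real) \<Rightarrow> nat \<Rightarrow> 'f set \<Rightarrow> 'f set" where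
  "reach_along tt 0 S = S"
| "reach_along tt (Suc l) S = reach_set (\<sigma> (tt l)) (reach_along tt l S)"

lemma subset_reach_set: "S \<subseteq> reach_set m S"
  unfolding reach_set_def by auto

lemma reach_along_mono: "l \<le> l' \<Longrightarrow> reach_along tt l S \<subseteq> reach_along tt l' S"
  using lift_Suc_mono_le[of "\<lambda>l. reach_along tt l S"] subset_reach_set by auto

lemma dwell_partition_relpowp:
  assumes "dwell_partition \<sigma> \<tau> a b s tt"
  shows "(dwell_step \<tau> ^^ s) (a, S) (b, reach_along tt s S)"
proof -
  have "(dwell_step \<tau> ^^ l) (a, S) (tt l, reach_along tt l S)" if "l \<le> s" for l
    using that
  proof (induction l)
    case 0
    then show ?case by (simp add: dwell_partitionD(1)[OF assms])
  next
    case (Suc l)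
    then have "l < s" by simp
    then have "dwell_step \<tau> (tt l, reach_along tt l S) (tt (Suc l), reach_along tt (Suc l) S)"
      unfolding dwell_step_def fst_conv snd_conv reach_along.simps
      using dwell_partitionD(3,4)[OF assms] by blast
    then show ?case using Suc by auto
  qed
  then show ?thesis using dwell_partitionD(2)[OF assms] by fastforce
qed

lemma union_edge_imp_adj: "union_edge A d \<sigma> a b u v \<Longrightarrow> \<exists>r\<in>{a..<b}. adj (\<sigma> r) u v"
  unfolding union_edge_def adj_def weight_def by (cases u; cases v) auto

text \<open>Joint connectivity yields an edge of some active graph leaving the set of already informed
  nodes; the subinterval containing its activation time informs its endpoint.\<close>

lemma reach_along_grows:
  assumes "jointly_connected A d \<sigma> a b" and partition: "dwell_partition \<sigma> \<tau> a b s tt"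
    and "\<tau> > 0" and "S \<noteq> UNIV"
  shows "\<exists>i. i \<notin> S \<and> i \<in> reach_along tt s S"
proof -
  obtain i0 where "i0 \<notin> S" using assms(4) by blast
  have "(union_edge A d \<sigma> a b)\<^sup>*\<^sup>* None (Some i0)"
    using assms(1) unfolding jointly_connected_def by blast
  then obtain x y where xy: "union_edge A d \<sigma> a b x y"
    "x \<in> insert None (Some ` S)" "y \<notin> insert None (Some ` S)"
    using rtranclp_exit_edge[of _ None "Some i0" "\<lambda>u. u \<in> insert None (Some ` S)"] \<open>i0 \<notin> S\<close> by blast
  obtain i where "y = Some i" "i \<notin> S" using xy(3) by (cases y) auto
  obtain r where r: "r \<in> {a..<b}" "adj (\<sigma> r) x y" using union_edge_imp_adj[OF xy(1)] by blast
  have "tt l \<le> tt (Suc l)" if "l < s" for l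
    using dwell_partitionD(3)[OF partition that] \<open>\<tau> > 0\<close> by linarith
  moreover have "r \<in> {tt 0..<tt s}" using r(1) dwell_partitionD(1,2)[OF partition] by simp
  ultimately obtain l where l: "l < s" "r \<in> {tt l..<tt (Suc l)}"
    using subdivision_covers_atLeastLessThan[of s tt r] by blast
  then have "\<sigma> r = \<sigma> (tt l)" by (rule dwell_partitionD(4)[OF partition])
  then have "adj (\<sigma> (tt l)) x (Some i)" using r(2) \<open>y = Some i\<close> by simp
  moreover have "x \<in> insert None (Some ` reach_along tt l S)"
    using xy(2) reach_along_mono[of 0 l tt S] by auto
  ultimately have "i \<in> reach_along tt (Suc l) S" by (auto simp: reach_set_def)
  then show ?thesis using reach_along_mono[of "Suc l" s tt S] l(1) \<open>i \<notin> S\<close> by auto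
qed

lemma switching_periods:
  obtains \<tau> K where "\<tau> > 0" "\<And>k. real k * \<tau> \<le> t k"
    "\<And>k S. \<exists>S'. (\<exists>n\<in>{..K}. (dwell_step \<tau> ^^ n) (t k, S) (t (Suc k), S')) \<and> S \<subseteq> S' \<and> (S \<noteq> UNIV \<longrightarrow> S' \<noteq> S)"
proof -
  obtain \<tau> B where "\<tau> > 0" "t 0 = 0" and t_less: "\<And>k. t k < t (Suc k)" and gap: "\<And>k. t (Suc k) - t k \<le> B"
    and partition: "\<And>k. \<exists>s tt. dwell_partition \<sigma> \<tau> (t k) (t (Suc k)) s tt"
    using admissible_switchingE[OF switching] by blast
  define K where "K = nat \<lceil>B / \<tau>\<rceil>"
  have period: "\<exists>S'. (\<exists>n\<in>{..K}. (dwell_step \<tau> ^^ n) (t k, S) (t (Suc k), S')) \<and> S \<subseteq> S' \<and> (S \<noteq> UNIV \<longrightarrow> S' \<noteq> S)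
      \<and> t k + \<tau> \<le> t (Suc k)" for k S
  proof -
    obtain s tt where st: "dwell_partition \<sigma> \<tau> (t k) (t (Suc k)) s tt" using partition by blast
    have "t k + real s * \<tau> \<le> t (Suc k)"
      using dwell_partition_lower_bound[OF st, of s] dwell_partitionD(2)[OF st] by simp
    then have "real s \<le> B / \<tau>" using gap[of k] \<open>\<tau> > 0\<close> by (simp add: field_simps)
    then have "s \<le> K" unfolding K_def by linarith
    moreover have "s \<noteq> 0" using dwell_partitionD(1,2)[OF st] t_less[of k] by (metis less_irrefl)
    then have "1 * \<tau> \<le> real s * \<tau>" using \<open>\<tau> > 0\<close> by (intro mult_right_mono) auto
    then have "t k + \<tau> \<le> t (Suc k)" using \<open>t k + real s * \<tau> \<le> t (Suc k)\<close> by simp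
    moreover have "S \<subseteq> reach_along tt s S" using reach_along_mono[of 0 s tt S] by simp
    moreover have "S \<noteq> UNIV \<longrightarrow> reach_along tt s S \<noteq> S" using reach_along_grows[OF joint_conn st \<open>\<tau> > 0\<close>] by blast
    ultimately show ?thesis using dwell_partition_relpowp[OF st] by blast
  qed
  have t_step: "t k + \<tau> \<le> t (Suc k)" for k using period[of k "{}"] by blast
  have "real k * \<tau> \<le> t k" for k
  proof (induction k)
    case (Suc k)
    then show ?case using t_step[of k] by (simp add: algebra_simps)
  qed (simp add: \<open>t 0 = 0\<close>)
  moreover have "\<exists>S'. (\<exists>n\<in>{..K}. (dwell_step \<tau> ^^ n) (t k, S) (t (Suc k), S')) \<and> S \<subseteq> S'
      \<and> (S \<noteq> UNIV \<longrightarrow> S' \<noteq> S)" for k S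
    using period[of k S] by blast
  ultimately show ?thesis by (rule that[OF \<open>\<tau> > 0\<close>])
qed

lemma exists_informing_propagation:
  obtains P where "propagates W (\<lambda>s i. V (err s i)) P" "\<And>x y. P x y \<Longrightarrow> fst x \<le> fst y"
    "\<And>s. \<exists>a\<ge>s. \<exists>b. P (a, {}) (b, UNIV)"
proof -
  obtain \<tau> K where "\<tau> > 0" and t_lower: "\<And>k. real k * \<tau> \<le> t k"
    and period: "\<And>k S. \<exists>S'. (\<exists>n\<in>{..K}. (dwell_step \<tau> ^^ n) (t k, S) (t (Suc k), S')) \<and> S \<subseteq> S'
      \<and> (S \<noteq> UNIV \<longrightarrow> S' \<noteq> S)"
    using switching_periods by blast
  define Q where "Q x y \<longleftrightarrow> (\<exists>n\<in>{..K}. (dwell_step \<tau> ^^ n) x y)" for x y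
  have step_forward: "fst x \<le> fst y" if "dwell_step \<tau> x y" for x y
    using that \<open>\<tau> > 0\<close> by (simp add: dwell_step_def)
  have Q_forward: "fst x \<le> fst y" if Qxy: "Q x y" for x y
  proof -
    obtain n where "(dwell_step \<tau> ^^ n) x y" using Qxy by (auto simp: Q_def)
    then show ?thesis by (rule relpowp_forward[OF step_forward, rotated])
  qed
  have "propagates W (\<lambda>s i. V (err s i)) Q"
    unfolding Q_def using W_antitone step_forward propagates_dwell_step[OF \<open>\<tau> > 0\<close>]
    by (intro propagates_finite_Ex propagates_relpowp) auto
  then have "propagates W (\<lambda>s i. V (err s i)) (Q ^^ CARD('f))"
    using W_antitone Q_forward by (intro propagates_relpowp)
  moreover have "fst x \<le> fst y" if "(Q ^^ CARD('f)) x y" for x y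
    using relpowp_forward[OF Q_forward that] .
  moreover have "\<exists>a\<ge>s. \<exists>b. (Q ^^ CARD('f)) (a, {}) (b, UNIV)" for s
  proof -
    define k where "k = nat \<lceil>s / \<tau>\<rceil>"
    have "s / \<tau> \<le> real k" unfolding k_def by linarith
    then have "s \<le> t k" using t_lower[of k] \<open>\<tau> > 0\<close> by (simp add: field_simps)
    moreover have "(Q ^^ CARD('f)) (t k, {}) (t (k + CARD('f)), UNIV)"
      unfolding Q_def by (rule relpowp_grows_to_UNIV) (use period in blast)
    ultimately show ?thesis by blast
  qed
  ultimately show ?thesis using that by blast
qed

lemma W_arbitrarily_small:
  assumes "\<epsilon> > 0"
  shows "\<exists>s\<ge>0. W s < \<epsilon>"
proof -
  obtain P where "propagates W (\<lambda>s i. V (err s i)) P" and P_forward: "\<And>x y. P x y \<Longrightarrow> fst x \<le> fst y"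
    and informs: "\<And>s. \<exists>a\<ge>s. \<exists>b. P (a, {}) (b, UNIV)"
    using exists_informing_propagation by blast
  moreover have "\<epsilon> / CARD('f) > 0" using \<open>\<epsilon> > 0\<close> by simp
  ultimately obtain \<eta>' \<delta> where "\<delta> > 0" and small_after: "\<forall>a S b S'. P (a, S) (b, S') \<longrightarrow> 0 \<le> a \<longrightarrow>
      W a - W b < \<delta> \<longrightarrow> (\<forall>i\<in>S. V (err a i) < \<eta>') \<longrightarrow> (\<forall>i\<in>S'. V (err b i) < \<epsilon> / CARD('f))"
    unfolding propagates_def by blast
  define L where "L = Inf (W ` {0..})"
  have L_le: "L \<le> W s" if "0 \<le> s" for s
    unfolding L_def using that lyap_def V_nonneg
    by (intro cInf_lower bdd_belowI[of _ 0]) (auto intro: sum_nonneg)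
  obtain s0 where "0 \<le> s0" "W s0 < L + \<delta>"
    using cInf_lessD[of "W ` {0..}" "L + \<delta>"] \<open>\<delta> > 0\<close> unfolding L_def by auto
  obtain a b where "s0 \<le> a" and P_ab: "P (a, {}) (b, UNIV)" using informs by blast
  then have "0 \<le> a" "a \<le> b" using \<open>0 \<le> s0\<close> P_forward[OF P_ab] by auto
  have "W a \<le> W s0" using \<open>0 \<le> s0\<close> \<open>s0 \<le> a\<close> by (rule W_antitone)
  moreover have "L \<le> W b" using \<open>0 \<le> a\<close> \<open>a \<le> b\<close> by (intro L_le) simp
  ultimately have "W a - W b < \<delta>" using \<open>W s0 < L + \<delta>\<close> by linarith
  then have "\<forall>i. V (err b i) < \<epsilon> / CARD('f)" using small_after P_ab \<open>0 \<le> a\<close> by blast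
  then have "W b < CARD('f) * (\<epsilon> / CARD('f))" by (intro lyap_less) auto
  moreover have "0 \<le> b" using \<open>0 \<le> a\<close> \<open>a \<le> b\<close> by linarith
  ultimately show ?thesis by auto
qed

lemma err_tendsto_zero: "((\<lambda>s. norm (z s i - z\<^sub>\<gamma>)) \<longlongrightarrow> 0) at_top"
proof (rule tendstoI)
  fix \<rho> :: real assume "\<rho> > 0"
  obtain R where R: "\<And>s i. 0 \<le> s \<Longrightarrow> norm (err s i) \<le> R" using err_bounded by blast
  obtain \<mu> where "\<mu> > 0" and \<mu>: "\<forall>x\<in>cball 0 R. norm (V x) < \<mu> \<longrightarrow> norm x < \<rho>"
    using small_value_imp_small_arg[of R V \<rho>] continuous_on_subset[OF V_continuous] V_pos \<open>\<rho> > 0\<close>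
    by fastforce
  obtain s0 where "0 \<le> s0" "W s0 < \<mu>" using W_arbitrarily_small[OF \<open>\<mu> > 0\<close>] by blast
  have "norm (err s i) < \<rho>" if "s0 \<le> s" for s
  proof -
    have "V (err s i) \<le> W s0"
      using V_err_le_lyap[of i UNIV s] W_antitone[OF \<open>0 \<le> s0\<close> that] by simp
    then show ?thesis using \<mu> R[of s i] \<open>W s0 < \<mu>\<close> \<open>0 \<le> s0\<close> that V_nonneg by auto
  qed
  then show "\<forall>\<^sub>F s in at_top. dist (norm (z s i - z\<^sub>\<gamma>)) 0 < \<rho>"
    unfolding eventually_at_top_linorder by (auto simp: err_def)
qed

end

theorem theorem1:
  fixes A :: "'m::finite \<Rightarrow> 'f::finite \<Rightarrow> 'f \<Rightarrow> real"
    and d :: "'m \<Rightarrow> 'f \<Rightarrow> real"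
    and \<sigma> :: "real \<Rightarrow> 'm"
    and t :: "nat \<Rightarrow> real"
    and h :: "real^'n \<Rightarrow> real^'n"
    and z\<^sub>\<gamma> :: "real^'n"
    and V :: "real^'n \<Rightarrow> real"
    and gradV :: "real^'n \<Rightarrow> real^'n"
    and q :: "real^'n \<Rightarrow> real^'p"
    and \<Psi> :: "real^'p^'p"
    and z :: "real \<Rightarrow> 'f \<Rightarrow> real^'n"
  assumes A_sym: "\<And>k i j. A k i j = A k j i"
    and A_nonneg: "\<And>k i j. A k i j \<ge> 0"
    and A_diag: "\<And>k i. A k i i = 0"
    and d_nonneg: "\<And>k i. d k i \<ge> 0"
    and switching: "admissible_switching \<sigma> t"
    and h_poly: "poly_map h"
    and V_poly: "poly_fun V"
    and V_nonneg: "\<And>x. V x \<ge> 0"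
    and V_zero: "V 0 = 0"
    and V_pos: "\<And>x. x \<noteq> 0 \<Longrightarrow> V x > 0"
    and V_radial: "\<And>M. \<exists>R. \<forall>x. norm x \<ge> R \<longrightarrow> V x \<ge> M"
    and V_grad: "\<And>x. GDERIV V x :> gradV x"
    and gradV_cont: "continuous_on UNIV gradV"
    and q_poly: "poly_map q"
    and q_zero: "\<And>\<alpha>. q \<alpha> = 0 \<longleftrightarrow> \<alpha> = 0"
    and Psi_sym: "transpose \<Psi> = \<Psi>"
    and Psi_pd: "\<And>x. x \<noteq> 0 \<Longrightarrow> x \<bullet> (\<Psi> *v x) > 0"
    and assumption1: "\<And>\<alpha> \<beta> \<gamma>.
          (gradV (\<alpha> - \<gamma>) - gradV (\<beta> - \<gamma>)) \<bullet> (h \<alpha> - h \<beta>)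
          \<ge> (q (\<alpha> - \<gamma>) - q (\<beta> - \<gamma>)) \<bullet> (\<Psi> *v (q (\<alpha> - \<gamma>) - q (\<beta> - \<gamma>)))"
    and joint_conn: "\<And>k. jointly_connected A d \<sigma> (t k) (t (Suc k))"
    and z_cont: "\<And>i. continuous_on {0..} (\<lambda>s. z s i)"
    and z_ode: "\<And>i s. s \<ge> 0 \<Longrightarrow>
          ((\<lambda>r. z r i) has_vector_derivative
             ((\<Sum>j\<in>UNIV. A (\<sigma> s) i j *\<^sub>R (h (z s j) - h (z s i)))
              + d (\<sigma> s) i *\<^sub>R (h z\<^sub>\<gamma> - h (z s i)))) (at s within {s..})"
  shows "\<forall>i. ((\<lambda>s. norm (z s i - z\<^sub>\<gamma>)) \<longlongrightarrow> 0) at_top"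
proof -
  interpret leader_following A d \<sigma> t h z\<^sub>\<gamma> V gradV q \<Psi> z
    using A_sym A_nonneg d_nonneg switching poly_map_continuous[OF h_poly] V_zero V_pos
      V_radial V_grad poly_map_continuous[OF q_poly] q_zero Psi_pd assumption1 joint_conn z_cont z_ode
    by unfold_locales
  show ?thesis using err_tendsto_zero by blast
qed

end
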